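(* For $c>0$ and $t\ge 0$ let $$l(c,t)=\begin{cases}\dfrac{t}{t+1}\log c+\dfrac t2, & c\ge 1,\\[2mm] \dfrac{ct}{2}, & 0<c\le 1,\end{cases}\qquad u(c,t)=\min\Big\{\log\Big(c+\frac{1}{4c}\Big)+\frac t2,\ \log(1+ct)+c(e^t-1)\Big\}.$$ Then for all $t>0$ and $c>0$, $$l(c,t)<\log\Big(1+2c\sinh\frac t2\Big)\le u(c,t).$$ Moreover, for $t>0$ and $c>0$, equality holds in the upper bound if and only if $c>\frac12$ and $t=2\log(2c)$. *)

theory Defs
  imports Complex_Main
begin

text \<open>Lower bound l(c,t) (defined for c > 0, t \<ge> 0; both branches agree at c = 1).\<close>
definition lbound :: "real \<Rightarrow> real \<Rightarrow> real" where
  "lbound c t = (if c \<ge> 1 then t / (t + 1) * ln c + t / 2 else c * t / 2)"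

definition ubound :: "real \<Rightarrow> real \<Rightarrow> real" where
  "ubound c t = min (ln (c + 1 / (4 * c)) + t / 2) (ln (1 + c * t) + c * (exp t - 1))"

end

theory Submission
  imports Defs "HOL-Analysis.Convex"
begin

text \<open>Put \<open>x = exp (t/2) > 1\<close>, so that \<open>A = 1 + 2 c sinh (t/2) = 1 + c (x - 1/x)\<close>.
  The first upper bound is AM-GM: \<open>(c + 1/(4c)) x - A = (x - 2c)\<^sup>2 / (4cx)\<close>, with equality
  exactly when \<open>x = 2c\<close>. The second is strict: \<open>ln A \<le> A - 1\<close> and
  \<open>exp t - 1 = 2 x sinh (t/2) > 2 sinh (t/2)\<close>. Hence equality with the minimum can only
  come from the first bound. Both lower bounds are weighted AM-GM, \<open>a powr s \<le> s a + (1 - s)\<close>,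
  applied to \<open>c\<^bsup>t/(t+1)\<^esup>\<close> for \<open>c \<ge> 1\<close> and to \<open>x\<^sup>c\<close> for \<open>c \<le> 1\<close>, followed by an
  elementary comparison with \<open>A\<close> (using \<open>exp t \<ge> 1 + t\<close> in the first case).\<close>

lemma powr_le_weighted_mean:
  fixes a s :: real
  assumes "0 < a" "0 \<le> s" "s \<le> 1"
  shows "a powr s \<le> s * a + (1 - s)"
  using Youngs_inequality_0 [of s "1 - s" a 1] assms by simp

lemma one_plus_sinh_half_eq:
  fixes c t :: real
  shows "1 + 2 * c * sinh (t / 2) = 1 + c * (exp (t / 2) - 1 / exp (t / 2))"
  by (simp add: sinh_def exp_minus field_simps)

lemma exp_minus_one_eq_sinh_half:
  fixes t :: real
  shows "exp t - 1 = 2 * exp (t / 2) * sinh (t / 2)"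
  by (simp add: sinh_def exp_minus field_simps flip: exp_add)

lemma AM_GM_defect_eq:
  fixes c x :: real
  assumes "0 < c" "0 < x"
  shows "(c + 1 / (4 * c)) * x - (1 + c * (x - 1 / x)) = (x - 2 * c)\<^sup>2 / (4 * c * x)"
  using assms by (simp add: field_simps power2_eq_square)

lemma ln_one_plus_sinh_half_le_first:
  fixes c t :: real
  assumes "0 < c" "0 < t"
  shows "ln (1 + 2 * c * sinh (t / 2)) \<le> ln (c + 1 / (4 * c)) + t / 2"
    and "ln (1 + 2 * c * sinh (t / 2)) = ln (c + 1 / (4 * c)) + t / 2 \<longleftrightarrow> exp (t / 2) = 2 * c"
proof -
  define x where "x = exp (t / 2)"
  define A where "A = 1 + 2 * c * sinh (t / 2)"
  have "x > 0" unfolding x_def by simp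
  have "A > 1" unfolding A_def using assms by simp
  have A_eq: "A = 1 + c * (x - 1 / x)"
    unfolding A_def x_def by (rule one_plus_sinh_half_eq)
  have "c + 1 / (4 * c) > 0"
    using assms by (simp add: add_pos_pos)
  then have bound_pos: "(c + 1 / (4 * c)) * x > 0"
    using \<open>x > 0\<close> by simp
  have rhs_eq: "ln (c + 1 / (4 * c)) + t / 2 = ln ((c + 1 / (4 * c)) * x)"
    using \<open>c + 1 / (4 * c) > 0\<close> \<open>x > 0\<close> by (simp add: ln_mult x_def)
  have defect: "(c + 1 / (4 * c)) * x - A = (x - 2 * c)\<^sup>2 / (4 * c * x)"
    unfolding A_eq using AM_GM_defect_eq assms \<open>x > 0\<close> by blast
  have "(x - 2 * c)\<^sup>2 / (4 * c * x) \<ge> 0"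
    using assms \<open>x > 0\<close> by simp
  then have "A \<le> (c + 1 / (4 * c)) * x"
    using defect by simp
  then show "ln A \<le> ln (c + 1 / (4 * c)) + t / 2"
    unfolding rhs_eq using \<open>A > 1\<close> by simp
  have "A = (c + 1 / (4 * c)) * x \<longleftrightarrow> x = 2 * c"
    using defect assms \<open>x > 0\<close> by auto
  then show "ln A = ln (c + 1 / (4 * c)) + t / 2 \<longleftrightarrow> x = 2 * c"
    unfolding rhs_eq using \<open>A > 1\<close> bound_pos by simp
qed

lemma ln_one_plus_sinh_half_less_second:
  fixes c t :: real
  assumes "0 < c" "0 < t"
  shows "ln (1 + 2 * c * sinh (t / 2)) < ln (1 + c * t) + c * (exp t - 1)"
proof -
  have "1 < 1 + 2 * c * sinh (t / 2)"
    using assms by simp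
  then have "ln (1 + 2 * c * sinh (t / 2)) \<le> 2 * c * sinh (t / 2)"
    using ln_le_minus_one [of "1 + 2 * c * sinh (t / 2)"] by simp
  also have "\<dots> < c * (exp t - 1)"
  proof -
    have "sinh (t / 2) < exp (t / 2) * sinh (t / 2)"
      using assms by simp
    then show ?thesis
      unfolding exp_minus_one_eq_sinh_half using assms by simp
  qed
  also have "\<dots> \<le> ln (1 + c * t) + c * (exp t - 1)"
    using assms by simp
  finally show ?thesis .
qed

lemma ln_one_plus_sinh_half_le_ubound:
  fixes c t :: real
  assumes "0 < c" "0 < t"
  shows "ln (1 + 2 * c * sinh (t / 2)) \<le> ubound c t"
    and "ln (1 + 2 * c * sinh (t / 2)) = ubound c t \<longleftrightarrow> exp (t / 2) = 2 * c"
  using ln_one_plus_sinh_half_le_first [OF assms] ln_one_plus_sinh_half_less_second [OF assms]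
  by (auto simp: ubound_def min_def)

lemma exp_half_eq_iff:
  fixes c t :: real
  assumes "0 < c" "0 < t"
  shows "exp (t / 2) = 2 * c \<longleftrightarrow> c > 1 / 2 \<and> t = 2 * ln (2 * c)"
proof
  assume eq: "exp (t / 2) = 2 * c"
  have "exp (t / 2) > 1"
    using assms by simp
  moreover have "t / 2 = ln (2 * c)"
    using eq by (metis ln_exp)
  ultimately show "c > 1 / 2 \<and> t = 2 * ln (2 * c)"
    using eq by simp
next
  assume "c > 1 / 2 \<and> t = 2 * ln (2 * c)"
  then show "exp (t / 2) = 2 * c"
    using assms by simp
qed

lemma mean_times_exp_half_less:
  fixes c t :: real
  assumes "1 \<le> c" "0 < t"
  shows "(t * c + 1) / (t + 1) * exp (t / 2) < 1 + 2 * c * sinh (t / 2)"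
proof -
  define x where "x = exp (t / 2)"
  have "x > 1" and "x\<^sup>2 = exp t"
    unfolding x_def using assms by (simp_all add: power2_eq_square flip: exp_add)
  have "(t + 1) * x > 0"
    using assms \<open>x > 1\<close> by simp
  have mean_scaled: "(t + 1) * x * ((t * c + 1) / (t + 1) * x) = (t * c + 1) * x\<^sup>2"
    using assms by (simp add: field_simps power2_eq_square)
  have A_scaled: "(t + 1) * x * (1 + 2 * c * sinh (t / 2)) = (t + 1) * (x + c * x\<^sup>2 - c)"
    using \<open>x > 1\<close> unfolding one_plus_sinh_half_eq x_def [symmetric]
    by (simp add: field_simps power2_eq_square)
  have "t + 1 \<le> x\<^sup>2"
    unfolding \<open>x\<^sup>2 = exp t\<close> using exp_ge_add_one_self [of t] by linarith
  then have "(c - 1) * (x\<^sup>2 - (t + 1)) \<ge> 0"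
    using assms by simp
  moreover have "(t + 1) * (x - 1) > 0"
    using assms \<open>x > 1\<close> by simp
  ultimately have "(t * c + 1) * x\<^sup>2 < (t + 1) * (x + c * x\<^sup>2 - c)"
    by (simp add: algebra_simps power2_eq_square)
  then have "(t + 1) * x * ((t * c + 1) / (t + 1) * x) < (t + 1) * x * (1 + 2 * c * sinh (t / 2))"
    unfolding mean_scaled A_scaled .
  then show ?thesis
    unfolding x_def [symmetric] using mult_less_cancel_left_pos [OF \<open>(t + 1) * x > 0\<close>] by blast
qed

lemma ln_one_plus_sinh_half_gt_ge_one:
  fixes c t :: real
  assumes "1 \<le> c" "0 < t"
  shows "t / (t + 1) * ln c + t / 2 < ln (1 + 2 * c * sinh (t / 2))"
proof -
  define s where "s = t / (t + 1)"
  have "t / (t + 1) * ln c + t / 2 = ln (c powr s * exp (t / 2))"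
    unfolding s_def using assms by (simp add: ln_mult ln_powr)
  also have "\<dots> < ln (1 + 2 * c * sinh (t / 2))"
  proof (rule ln_strict_mono)
    have "0 \<le> s" "s \<le> 1"
      unfolding s_def using assms by auto
    then have "c powr s \<le> s * c + (1 - s)"
      using powr_le_weighted_mean [of c s] assms by simp
    also have "\<dots> = (t * c + 1) / (t + 1)"
      unfolding s_def using assms by (simp add: field_simps)
    finally have "c powr s * exp (t / 2) \<le> (t * c + 1) / (t + 1) * exp (t / 2)"
      by (rule mult_right_mono) simp
    also have "\<dots> < 1 + 2 * c * sinh (t / 2)"
      using mean_times_exp_half_less [OF assms] .
    finally show "c powr s * exp (t / 2) < 1 + 2 * c * sinh (t / 2)" .
    show "0 < c powr s * exp (t / 2)"
      using assms by simp
  qed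
  finally show ?thesis .
qed

lemma ln_one_plus_sinh_half_gt_le_one:
  fixes c t :: real
  assumes "0 < c" "c \<le> 1" "0 < t"
  shows "c * t / 2 < ln (1 + 2 * c * sinh (t / 2))"
proof -
  define x where "x = exp (t / 2)"
  have "x > 1"
    unfolding x_def using assms by simp
  have "c * t / 2 = ln (x powr c)"
    unfolding x_def by (simp add: ln_powr)
  also have "\<dots> < ln (1 + 2 * c * sinh (t / 2))"
  proof (rule ln_strict_mono)
    have "x powr c \<le> c * x + (1 - c)"
      using powr_le_weighted_mean [of x c] assms \<open>x > 1\<close> by simp
    also have "\<dots> < 1 + c * (x - 1 / x)"
      using assms \<open>x > 1\<close> by (simp add: algebra_simps divide_less_eq)
    also have "\<dots> = 1 + 2 * c * sinh (t / 2)"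
      unfolding x_def by (rule one_plus_sinh_half_eq [symmetric])
    finally show "x powr c < 1 + 2 * c * sinh (t / 2)" .
    show "0 < x powr c"
      using \<open>x > 1\<close> by simp
  qed
  finally show ?thesis .
qed

theorem lemma3p8:
  fixes c t :: real
  assumes "t > 0" and "c > 0"
  shows "lbound c t < ln (1 + 2 * c * sinh (t / 2))
         \<and> ln (1 + 2 * c * sinh (t / 2)) \<le> ubound c t
         \<and> (ln (1 + 2 * c * sinh (t / 2)) = ubound c t \<longleftrightarrow> c > 1 / 2 \<and> t = 2 * ln (2 * c))"
proof -
  have "lbound c t < ln (1 + 2 * c * sinh (t / 2))"
    using ln_one_plus_sinh_half_gt_ge_one ln_one_plus_sinh_half_gt_le_one assms
    by (simp add: lbound_def)
  moreover note ln_one_plus_sinh_half_le_ubound [OF \<open>c > 0\<close> \<open>t > 0\<close>]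
  ultimately show ?thesis
    using exp_half_eq_iff assms by blast
qed

end
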